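(* For every integer $b\ge 2$ and every $0<\alpha<1$ there exist $d\in\mathbb{N}$ and Lipschitz functions $g_0,\dots,g_{d-1}\colon\mathbb{S}^1\to\mathbb{R}$ such that the Weierstrass embedding $\Phi=\Phi^{\alpha,b}_{\{g_0,\dots,g_{d-1}\}}\colon\mathbb{S}^1\to\mathbb{R}^d$ is $\alpha$-bi-Hölder, i.e. there are constants $c_1,c_2>0$ with $$c_1|x-y|^\alpha\le\|\Phi(x)-\Phi(y)\|\le c_2|x-y|^\alpha\quad\text{for all } x,y\in[0,1).$$
   Context: $\mathbb{S}^1$ is identified with $\mathbb{R}/\mathbb{Z}$ (points represented in $[0,1)$), and functions on $\mathbb{S}^1$ are $1$-periodic functions on $\mathbb{R}$. For an integer $b\ge2$, $0<\alpha<1$ and a Lipschitz $g\colon\mathbb{S}^1\to\mathbb{R}$, $W_g^{\alpha,b}(x)=\sum_{k=0}^\infty b^{-\alpha k}g(b^kx)$. For a finite collection $\mathcal{G}=\{g_0,\dots,g_{d-1}\}$ of Lipschitz functions on $\mathbb{S}^1$, the Weierstrass embedding is $\Phi^{\alpha,b}_{\mathcal{G}}(x)=(W^{\alpha,b}_{g_0}(x),\dots,W^{\alpha,b}_{g_{d-1}}(x))\in\mathbb{R}^d$. $\|\cdot\|$ is the $\ell^\infty$ norm on $\mathbb{R}^d$. *)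

theory Defs
  imports "HOL-Analysis.Analysis"
begin

text \<open>Functions on the circle S^1 = R/Z are 1-periodic functions on R.\<close>
definition one_periodic :: "(real \<Rightarrow> real) \<Rightarrow> bool" where
  "one_periodic g \<longleftrightarrow> (\<forall>x. g (x + 1) = g x)"

definition circle_lipschitz :: "(real \<Rightarrow> real) \<Rightarrow> bool" where
  "circle_lipschitz g \<longleftrightarrow> one_periodic g \<and> (\<exists>L. L-lipschitz_on UNIV g)"

definition weierstrass :: "real \<Rightarrow> nat \<Rightarrow> (real \<Rightarrow> real) \<Rightarrow> real \<Rightarrow> real" where
  "weierstrass \<alpha> b g x = (\<Sum>k. (real b) powr (- \<alpha> * real k) * g ((real b) ^ k * x))"

definition weierstrass_embedding ::
  "real \<Rightarrow> nat \<Rightarrow> nat \<Rightarrow> (nat \<Rightarrow> real \<Rightarrow> real) \<Rightarrow> real \<Rightarrow> nat \<Rightarrow> real" where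
  "weierstrass_embedding \<alpha> b d gs x = (\<lambda>i. if i < d then weierstrass \<alpha> b (gs i) x else 0)"

definition linf_dist :: "nat \<Rightarrow> (nat \<Rightarrow> real) \<Rightarrow> (nat \<Rightarrow> real) \<Rightarrow> real" where
  "linf_dist d u v = Max (insert 0 ((\<lambda>i. \<bar>u i - v i\<bar>) ` {..<d}))"

definition circle_dist :: "real \<Rightarrow> real \<Rightarrow> real" where
  "circle_dist x y = min (\<bar>x - y\<bar> - real_of_int \<lfloor>\<bar>x - y\<bar>\<rfloor>) (1 - (\<bar>x - y\<bar> - real_of_int \<lfloor>\<bar>x - y\<bar>\<rfloor>))"

end

theory Submission
  imports Defs
begin

text \<open>Write \<open>\<rho> = b powr -\<alpha>\<close>. The map \<open>g \<mapsto> W g\<close> is inverted by \<open>h \<mapsto> h - \<rho> h(b \<cdot>)\<close>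
  (the series telescopes), so \<open>cos 2\<pi>x\<close> and \<open>sin 2\<pi>x\<close> are themselves Weierstrass functions of
  Lipschitz functions; they separate points at circle distance \<open>\<delta> \<ge> b^-M\<close>. For smaller \<open>\<delta>\<close>,
  pick \<open>K\<close> with \<open>b^K \<delta> \<in> [b^-M, 1]\<close>. Among \<open>2 b^M\<close> shifted sawtooth functions of height
  \<open>\<eta> = 1/(2 b^M)\<close>, one rises by almost \<open>\<eta>\<close> between \<open>b^K x\<close> and \<open>b^K (x + \<delta>)\<close>, so its
  \<open>K\<close>-th term contributes \<open>\<eta> \<rho>^K\<close>, whereas no term can decrease by more than
  \<open>\<eta> \<rho>^k min (b^k \<delta>) 1\<close>; these losses sum to at most \<open>\<eta> C \<rho>^(M+K) \<le> \<eta> \<rho>^K / 2\<close>, where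
  \<open>C = scale_const\<close> and \<open>M\<close> is chosen with \<open>C \<rho>^M \<le> 1/2\<close>. Splitting the same sum at
  \<open>b^-N \<approx> \<delta>\<close> gives the upper bound \<open>C' \<delta>^\<alpha>\<close>.\<close>

section \<open>Periodic functions and the circle distance\<close>

lemma one_periodic_add_nat:
  assumes "one_periodic g"
  shows "g (x + real n) = g x"
proof (induction n)
  case (Suc n)
  have "g (x + real (Suc n)) = g ((x + real n) + 1)"
    by (simp add: algebra_simps)
  with Suc assms show ?case
    unfolding one_periodic_def by simp
qed simp

lemma one_periodic_compose_mult_nat:
  assumes "one_periodic g"
  shows "one_periodic (\<lambda>x. g (real n * x))"
  unfolding one_periodic_def
  using one_periodic_add_nat[OF assms] by (simp add: distrib_left)

lemma one_periodic_weierstrass: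
  assumes "one_periodic g"
  shows "one_periodic (weierstrass \<alpha> b g)"
  using one_periodic_compose_mult_nat[OF assms, of "b ^ _"]
  unfolding one_periodic_def weierstrass_def by simp

lemma circle_dist_lift:
  fixes x y :: real
  assumes "0 \<le> x" "x < 1" "0 \<le> y" "y < 1" "x \<noteq> y"
  obtains a where "0 < circle_dist x y" "circle_dist x y \<le> 1/2"
    "\<And>F. one_periodic F \<Longrightarrow> \<bar>F x - F y\<bar> = \<bar>F (a + circle_dist x y) - F a\<bar>"
proof -
  define D where "D = \<bar>x - y\<bar>"
  have D: "0 < D" "D < 1"
    using assms unfolding D_def by auto
  then have "\<lfloor>D\<rfloor> = 0"
    by (simp add: floor_eq_iff)
  then have dist: "circle_dist x y = min D (1 - D)"
    unfolding circle_dist_def D_def[symmetric] by simp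
  show ?thesis
  proof (cases "D \<le> 1/2")
    case True
    have "\<bar>F x - F y\<bar> = \<bar>F (min x y + D) - F (min x y)\<bar>" for F :: "real \<Rightarrow> real"
      unfolding D_def by (cases "x \<le> y") (auto simp: abs_minus_commute)
    with that[of "min x y"] show ?thesis
      using dist D True by auto
  next
    case False
    have "\<bar>F x - F y\<bar> = \<bar>F (max x y + (1 - D)) - F (max x y)\<bar>" if "one_periodic F" for F
    proof -
      have "max x y + (1 - D) = min x y + 1"
        unfolding D_def by auto
      then have "F (max x y + (1 - D)) = F (min x y)"
        using that unfolding one_periodic_def by metis
      then show ?thesis
        by (cases "x \<le> y") (auto simp: abs_minus_commute)
    qed
    with that[of "max x y"] show ?thesis
      using dist D False by auto
  qed
qed

lemma linf_dist_nonneg: "0 \<le> linf_dist d u v"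
  unfolding linf_dist_def by (intro Max_ge) auto

lemma abs_le_linf_dist: "i < d \<Longrightarrow> \<bar>u i - v i\<bar> \<le> linf_dist d u v"
  unfolding linf_dist_def by (intro Max_ge) auto

lemma linf_dist_le:
  assumes "\<And>i. i < d \<Longrightarrow> \<bar>u i - v i\<bar> \<le> C" "0 \<le> C"
  shows "linf_dist d u v \<le> C"
  unfolding linf_dist_def using assms by (subst Max_le_iff) auto

lemma linf_dist_cong:
  assumes "\<And>i. i < d \<Longrightarrow> u i = u' i" "\<And>i. i < d \<Longrightarrow> v i = v' i"
  shows "linf_dist d u v = linf_dist d u' v'"
  unfolding linf_dist_def using assms by (intro arg_cong[where f = "\<lambda>A. Max (insert 0 A)"]) auto

lemma circle_bi_holder_of_increments:
  fixes F :: "nat \<Rightarrow> real \<Rightarrow> real"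
  assumes periodic: "\<And>i. i < d \<Longrightarrow> one_periodic (F i)"
    and upper: "\<And>i a \<delta>. i < d \<Longrightarrow> 0 < \<delta> \<Longrightarrow> \<delta> \<le> 1/2 \<Longrightarrow>
        \<bar>F i (a + \<delta>) - F i a\<bar> \<le> c2 * \<delta> powr \<alpha>"
    and lower: "\<And>a \<delta>. 0 < \<delta> \<Longrightarrow> \<delta> \<le> 1/2 \<Longrightarrow>
        \<exists>i<d. c1 * \<delta> powr \<alpha> \<le> \<bar>F i (a + \<delta>) - F i a\<bar>"
    and "0 \<le> c2" "0 \<le> x" "x < 1" "0 \<le> y" "y < 1"
  shows "c1 * circle_dist x y powr \<alpha> \<le> linf_dist d (\<lambda>i. F i x) (\<lambda>i. F i y) \<and>
    linf_dist d (\<lambda>i. F i x) (\<lambda>i. F i y) \<le> c2 * circle_dist x y powr \<alpha>"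
proof (cases "x = y")
  case True
  then have "linf_dist d (\<lambda>i. F i x) (\<lambda>i. F i y) \<le> 0"
    by (intro linf_dist_le) auto
  then have "linf_dist d (\<lambda>i. F i x) (\<lambda>i. F i y) = 0"
    using linf_dist_nonneg order_antisym by blast
  then show ?thesis
    using True by (simp add: circle_dist_def)
next
  case False
  then obtain a where \<delta>: "0 < circle_dist x y" "circle_dist x y \<le> 1/2"
    and lift: "\<And>F. one_periodic F \<Longrightarrow> \<bar>F x - F y\<bar> = \<bar>F (a + circle_dist x y) - F a\<bar>"
    using circle_dist_lift assms by metis
  have "linf_dist d (\<lambda>i. F i x) (\<lambda>i. F i y) \<le> c2 * circle_dist x y powr \<alpha>"
    using upper \<delta> lift periodic \<open>0 \<le> c2\<close> by (intro linf_dist_le) auto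
  moreover obtain i where "i < d" "c1 * circle_dist x y powr \<alpha> \<le> \<bar>F i x - F i y\<bar>"
    using lower[OF \<delta>, of a] lift periodic by auto
  ultimately show ?thesis
    using abs_le_linf_dist[of i d "\<lambda>i. F i x" "\<lambda>i. F i y"] by auto
qed

section \<open>Geometric sums\<close>

lemma exists_power_mult_between:
  fixes B \<delta> :: real
  assumes "1 < B" "0 < \<delta>" "\<delta> < B"
  obtains N where "1 \<le> B ^ N * \<delta>" "B ^ N * \<delta> < B"
proof -
  obtain n where "1 / \<delta> < B ^ n"
    using real_arch_pow[OF assms(1)] by blast
  then have ex: "\<exists>n. 1 \<le> B ^ n * \<delta>"
    using assms by (auto simp: field_simps intro!: exI[of _ n])
  define N where "N = (LEAST n. 1 \<le> B ^ n * \<delta>)"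
  have N: "1 \<le> B ^ N * \<delta>"
    unfolding N_def by (rule LeastI_ex[OF ex])
  have "B ^ N * \<delta> < B"
  proof (cases N)
    case (Suc n)
    then have "\<not> 1 \<le> B ^ n * \<delta>"
      using not_less_Least[of n "\<lambda>n. 1 \<le> B ^ n * \<delta>"] unfolding N_def[symmetric] by simp
    then show ?thesis
      using Suc assms by (simp add: mult.assoc)
  qed (use assms in simp)
  with N that show ?thesis by blast
qed

lemma summable_power_min:
  fixes r B \<delta> :: real
  assumes "0 < r" "r < 1" "0 \<le> B" "0 \<le> \<delta>"
  shows "summable (\<lambda>k. r ^ k * min (B ^ k * \<delta>) 1)"
  using assms
  by (intro summable_comparison_test'[OF summable_geometric[of r]]) (auto simp: mult_left_le)

text \<open>Below the index \<open>N\<close> the terms form a geometric series of ratio \<open>r * B > 1\<close>,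
  dominated by its last term; from \<open>N\<close> on they are bounded by a geometric series of ratio
  \<open>r < 1\<close>, dominated by its first term.\<close>
lemma suminf_power_min_le:
  fixes r B \<delta> :: real
  assumes r: "0 < r" "r < 1" "1 < r * B" and \<delta>: "0 \<le> \<delta>" "B ^ N * \<delta> \<le> B"
  shows "(\<Sum>k. r ^ k * min (B ^ k * \<delta>) 1) \<le> (B / (r * B - 1) + 1 / (1 - r)) * r ^ N"
proof -
  define f where "f k = r ^ k * min (B ^ k * \<delta>) 1" for k
  have "0 < B"
    using zero_less_mult_pos[of r B] r by linarith
  then have summable: "summable f"
    unfolding f_def using r \<delta> by (intro summable_power_min) auto
  have tail: "(\<Sum>k. f (k + N)) \<le> r ^ N / (1 - r)"
  proof -
    have "(\<Sum>k. f (k + N)) \<le> (\<Sum>k. r ^ N * r ^ k)"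
    proof (rule suminf_le)
      show "f (k + N) \<le> r ^ N * r ^ k" for k
        unfolding f_def using r by (simp add: power_add mult_left_le mult.commute)
      show "summable (\<lambda>k. f (k + N))"
        using summable by (rule summable_ignore_initial_segment)
      show "summable (\<lambda>k. r ^ N * r ^ k)"
        using r by (intro summable_mult summable_geometric) auto
    qed
    also have "\<dots> = r ^ N / (1 - r)"
      using r by (simp add: suminf_mult suminf_geometric summable_geometric)
    finally show ?thesis .
  qed
  have head: "(\<Sum>k<N. f k) \<le> r ^ N * B / (r * B - 1)"
  proof -
    have "(\<Sum>k<N. f k) \<le> (\<Sum>k<N. (r * B) ^ k) * \<delta>"
      unfolding f_def sum_distrib_right using r
      by (intro sum_mono) (auto simp: power_mult_distrib mult.assoc)
    also have "\<dots> = ((r * B) ^ N - 1) / (r * B - 1) * \<delta>"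
      using r sum_gp_strict[of "r * B" N] minus_divide_divide[of "(r * B) ^ N - 1" "r * B - 1"]
      by simp
    also have "\<dots> \<le> (r * B) ^ N / (r * B - 1) * \<delta>"
      using r \<delta> by (intro mult_right_mono divide_right_mono) auto
    also have "\<dots> = r ^ N * (B ^ N * \<delta>) / (r * B - 1)"
      by (simp add: power_mult_distrib)
    also have "\<dots> \<le> r ^ N * B / (r * B - 1)"
      using r \<delta> by (intro divide_right_mono mult_left_mono) auto
    finally show ?thesis .
  qed
  have "(\<Sum>k. f k) = (\<Sum>k. f (k + N)) + (\<Sum>k<N. f k)"
    by (rule suminf_split_initial_segment[OF summable])
  with head tail show ?thesis
    unfolding f_def by (simp add: field_simps)
qed

lemma powr_minus_power:
  fixes B :: real
  assumes "0 < B"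
  shows "(B powr - \<alpha>) ^ n = (1 / B ^ n) powr \<alpha>"
proof -
  have "(B powr - \<alpha>) ^ n = (B powr real n) powr - \<alpha>"
    using assms by (simp only: powr_power powr_powr)
  also have "\<dots> = (1 / B ^ n) powr \<alpha>"
    using assms by (simp add: powr_realpow powr_minus_divide powr_divide)
  finally show ?thesis .
qed

section \<open>Increment estimates\<close>

lemma lipschitz_bounded_increment_le:
  fixes g :: "real \<Rightarrow> real"
  assumes lip: "\<And>s t. \<bar>g s - g t\<bar> \<le> L * \<bar>s - t\<bar>" and bounded: "\<And>s. \<bar>g s\<bar> \<le> M"
    and "0 \<le> h"
  shows "\<bar>g (x + h) - g x\<bar> \<le> (L + 2 * M) * min h 1"
proof -
  have "0 \<le> L" "0 \<le> M"
    using lip[of 1 0] bounded[of 0] abs_ge_zero[of "g 1 - g 0"] abs_ge_zero[of "g 0"] by simp_all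
  show ?thesis
  proof (cases "h \<le> 1")
    case True
    have "\<bar>g (x + h) - g x\<bar> \<le> L * h"
      using lip[of "x + h" x] \<open>0 \<le> h\<close> by simp
    also have "\<dots> \<le> (L + 2 * M) * h"
      using \<open>0 \<le> M\<close> \<open>0 \<le> h\<close> by (intro mult_right_mono) auto
    finally show ?thesis
      using True by simp
  next
    case False
    have "\<bar>g (x + h) - g x\<bar> \<le> 2 * M"
      using bounded[of "x + h"] bounded[of x] by linarith
    then show ?thesis
      using False \<open>0 \<le> L\<close> by simp
  qed
qed

text \<open>The staircase rises with slope 1 on \<open>[n, n + \<eta>]\<close> and is constant on \<open>[n + \<eta>, n + 1]\<close>;
  the sawtooth is its 1-periodic part, of slope \<open>1 - \<eta>\<close> on a window of length \<open>\<eta>\<close> after each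
  point of \<open>c + \<int>\<close> and of slope \<open>-\<eta>\<close> elsewhere.\<close>
definition staircase :: "real \<Rightarrow> real \<Rightarrow> real" where
  "staircase \<eta> w = \<eta> * of_int \<lfloor>w\<rfloor> + min \<eta> (w - of_int \<lfloor>w\<rfloor>)"

definition sawtooth :: "real \<Rightarrow> real \<Rightarrow> real \<Rightarrow> real" where
  "sawtooth \<eta> c z = staircase \<eta> (z - c) - \<eta> * (z - c)"

lemma staircase_increment_bounds:
  assumes "0 \<le> \<eta>" "\<eta> \<le> 1" "w \<le> w'"
  shows "staircase \<eta> w \<le> staircase \<eta> w'" "staircase \<eta> w' - staircase \<eta> w \<le> w' - w"
proof -
  define n n' where "n = \<lfloor>w\<rfloor>" and "n' = \<lfloor>w'\<rfloor>"
  have "n \<le> n'"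
    unfolding n_def n'_def using assms by (simp add: floor_mono)
  have frac: "0 \<le> w - n" "w - n < 1" "0 \<le> w' - n'" "w' - n' < 1"
    unfolding n_def n'_def by linarith+
  have unfold: "staircase \<eta> w = \<eta> * n + min \<eta> (w - n)" "staircase \<eta> w' = \<eta> * n' + min \<eta> (w' - n')"
    unfolding staircase_def n_def n'_def by simp_all
  have "staircase \<eta> w \<le> staircase \<eta> w' \<and> staircase \<eta> w' - staircase \<eta> w \<le> w' - w"
  proof (cases "n = n'")
    case True
    then show ?thesis
      unfolding unfold using assms by auto
  next
    case False
    with \<open>n \<le> n'\<close> have n': "real_of_int n + 1 \<le> real_of_int n'"
      by linarith
    then have "\<eta> * (n + 1) \<le> \<eta> * n'" "(1 - \<eta>) * 1 \<le> (1 - \<eta>) * (n' - n)"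
      using assms by (intro mult_left_mono; simp)+
    then have "\<eta> * n + \<eta> \<le> \<eta> * n'" "\<eta> * n' - \<eta> * n \<le> n' - n - 1 + \<eta>"
      by (simp_all add: algebra_simps)
    then show ?thesis
      unfolding unfold using frac assms by (simp add: min_def)
  qed
  then show "staircase \<eta> w \<le> staircase \<eta> w'" "staircase \<eta> w' - staircase \<eta> w \<le> w' - w"
    by auto
qed

lemma staircase_add_1: "staircase \<eta> (w + 1) = staircase \<eta> w + \<eta>"
  unfolding staircase_def by (simp add: algebra_simps)

lemma staircase_of_int:
  assumes "0 \<le> \<eta>" "\<eta> < 1"
  shows "staircase \<eta> (of_int q) = \<eta> * q" "staircase \<eta> (of_int q + \<eta>) = \<eta> * q + \<eta>"
proof -
  show "staircase \<eta> (of_int q) = \<eta> * q"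
    unfolding staircase_def using assms by simp
  have "\<lfloor>of_int q + \<eta>\<rfloor> = q"
    using assms by (simp add: floor_eq_iff)
  then show "staircase \<eta> (of_int q + \<eta>) = \<eta> * q + \<eta>"
    unfolding staircase_def by simp
qed

lemma sawtooth_bounds:
  assumes "0 \<le> \<eta>" "\<eta> \<le> 1"
  shows "0 \<le> sawtooth \<eta> c z" "sawtooth \<eta> c z \<le> \<eta>"
proof -
  define f where "f = (z - c) - of_int \<lfloor>z - c\<rfloor>"
  have f: "0 \<le> f" "f < 1"
    unfolding f_def by linarith+
  have eq: "sawtooth \<eta> c z = min \<eta> f - \<eta> * f"
    unfolding sawtooth_def staircase_def f_def by (simp add: algebra_simps)
  have "\<eta> * f \<le> \<eta>" "\<eta> * f \<le> f" "0 \<le> \<eta> * f"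
    using f assms by (simp_all add: mult_left_le mult_left_le_one_le)
  then show "0 \<le> sawtooth \<eta> c z" "sawtooth \<eta> c z \<le> \<eta>"
    unfolding eq by (auto simp: min_def)
qed

lemma one_periodic_sawtooth: "one_periodic (sawtooth \<eta> c)"
  unfolding one_periodic_def sawtooth_def
  using staircase_add_1[of \<eta> "_ - c"] by (simp add: algebra_simps)

lemma sawtooth_lipschitz:
  assumes "0 \<le> \<eta>" "\<eta> \<le> 1"
  shows "\<bar>sawtooth \<eta> c s - sawtooth \<eta> c t\<bar> \<le> \<bar>s - t\<bar>"
proof -
  have *: "\<bar>sawtooth \<eta> c s - sawtooth \<eta> c t\<bar> \<le> s - t" if "t \<le> s" for s t
  proof -
    have "sawtooth \<eta> c s - sawtooth \<eta> c t = (staircase \<eta> (s - c) - staircase \<eta> (t - c)) - \<eta> * (s - t)"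
      unfolding sawtooth_def by (simp add: algebra_simps)
    moreover have "0 \<le> \<eta> * (s - t)" "\<eta> * (s - t) \<le> s - t"
      using assms that by (simp_all add: mult_left_le_one_le)
    ultimately show ?thesis
      using staircase_increment_bounds[OF assms, of "t - c" "s - c"] that by (simp add: abs_le_iff)
  qed
  show ?thesis
    using *[of t s] *[of s t] by (cases "t \<le> s") (auto simp: abs_minus_commute)
qed

lemma sawtooth_increment_ge:
  assumes "0 \<le> \<eta>" "\<eta> \<le> 1" "0 \<le> l"
  shows "- \<eta> * min l 1 \<le> sawtooth \<eta> c (a + l) - sawtooth \<eta> c a"
proof (cases "l \<le> 1")
  case True
  have "staircase \<eta> (a - c) \<le> staircase \<eta> (a + l - c)"
    using staircase_increment_bounds(1)[OF assms(1,2)] assms by simp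
  then show ?thesis
    using True unfolding sawtooth_def by (simp add: algebra_simps)
next
  case False
  then show ?thesis
    using sawtooth_bounds[OF assms(1,2), of c "a + l"] sawtooth_bounds[OF assms(1,2), of c a] by simp
qed

lemma sawtooth_increment_ge_window:
  assumes "0 \<le> \<eta>" "\<eta> < 1" "a - c \<le> of_int q" "of_int q + \<eta> \<le> a + l - c"
  shows "\<eta> - \<eta> * l \<le> sawtooth \<eta> c (a + l) - sawtooth \<eta> c a"
proof -
  have "staircase \<eta> (a - c) \<le> staircase \<eta> (of_int q)"
    "staircase \<eta> (of_int q + \<eta>) \<le> staircase \<eta> (a + l - c)"
    using staircase_increment_bounds(1) assms by simp_all
  then have "\<eta> \<le> staircase \<eta> (a + l - c) - staircase \<eta> (a - c)"
    using staircase_of_int[of \<eta> q] assms by simp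
  then show ?thesis
    unfolding sawtooth_def by (simp add: algebra_simps)
qed

lemma abs_sawtooth_le: "0 \<le> \<eta> \<Longrightarrow> \<eta> \<le> 1 \<Longrightarrow> \<bar>sawtooth \<eta> c z\<bar> \<le> \<eta>"
  using sawtooth_bounds[of \<eta> c z] by simp

lemma exists_window_shift:
  fixes A l :: real and n :: nat
  assumes "0 < n" "2 / n \<le> l"
  obtains m q where "m < n" "A - m / n \<le> of_int q" "of_int q + 1 / n \<le> A - m / n + l"
proof -
  define c where "c = \<lceil>A * n\<rceil>"
  define m where "m = nat (c mod n)"
  have "0 \<le> c mod n" "c mod n < n"
    using assms by simp_all
  then have m: "m < n" "real_of_int (c mod n) = m"
    unfolding m_def by linarith+
  have "real_of_int c = real_of_int (c div n) * n + m"
    using m(2) by (metis of_int_add of_int_mult of_int_of_nat_eq div_mult_mod_eq)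
  then have c_div: "c / n = c div n + m / n"
    using assms by (simp add: field_simps)
  have "A * n \<le> c" "c < A * n + 1"
    unfolding c_def by linarith+
  then have "A \<le> c / n" "c / n < A + 1 / n"
    using assms by (simp_all add: field_simps)
  with c_div have "A - m / n \<le> of_int (c div n)" "of_int (c div n) + 1 / n < A - m / n + 2 / n"
    by (simp_all add: add_divide_distrib)
  with that[of m "c div n"] m(1) assms(2) show ?thesis
    by linarith
qed

lemma abs_cos_diff_le:
  fixes u v :: real
  shows "\<bar>cos u - cos v\<bar> \<le> \<bar>u - v\<bar>"
proof -
  have "\<bar>cos u - cos v\<bar> = 2 * (\<bar>sin ((u + v) / 2)\<bar> * \<bar>sin ((v - u) / 2)\<bar>)"
    unfolding cos_diff_cos abs_mult by simp
  also have "\<dots> \<le> 2 * (1 * \<bar>(v - u) / 2\<bar>)"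
    by (intro mult_left_mono mult_mono abs_sin_x_le_abs_x abs_sin_le_one) auto
  finally show ?thesis
    by (simp add: abs_minus_commute)
qed

lemma abs_sin_diff_le:
  fixes u v :: real
  shows "\<bar>sin u - sin v\<bar> \<le> \<bar>u - v\<bar>"
proof -
  have "\<bar>sin u - sin v\<bar> = 2 * (\<bar>sin ((u - v) / 2)\<bar> * \<bar>cos ((u + v) / 2)\<bar>)"
    unfolding sin_diff_sin abs_mult by simp
  also have "\<dots> \<le> 2 * (\<bar>(u - v) / 2\<bar> * 1)"
    by (intro mult_left_mono mult_mono abs_sin_x_le_abs_x abs_cos_le_one) auto
  finally show ?thesis
    by simp
qed

text \<open>The squared chord length is \<open>2 - 2 cos (2 \<pi> \<delta>)\<close>, and each coordinate difference is at
  most 2 in absolute value, so its square is at most twice its absolute value.\<close>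
lemma cos_sin_increment_ge:
  assumes "0 \<le> \<delta>\<^sub>0" "\<delta>\<^sub>0 \<le> \<delta>" "\<delta> \<le> 1/2"
  shows "1 - cos (2 * pi * \<delta>\<^sub>0)
    \<le> \<bar>cos (2 * pi * (a + \<delta>)) - cos (2 * pi * a)\<bar> + \<bar>sin (2 * pi * (a + \<delta>)) - sin (2 * pi * a)\<bar>"
proof -
  define u v :: real where "u = cos (2 * pi * (a + \<delta>)) - cos (2 * pi * a)"
    and "v = sin (2 * pi * (a + \<delta>)) - sin (2 * pi * a)"
  have "u\<^sup>2 + v\<^sup>2 = 2 - 2 * cos (2 * pi * (a + \<delta>) - 2 * pi * a)"
    unfolding u_def v_def cos_diff power2_eq_square
    using sin_cos_squared_add3[of "2 * pi * (a + \<delta>)"] sin_cos_squared_add3[of "2 * pi * a"]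
    by (simp add: algebra_simps)
  also have "\<dots> = 2 - 2 * cos (2 * pi * \<delta>)"
    by (simp add: algebra_simps)
  also have "\<dots> \<ge> 2 - 2 * cos (2 * pi * \<delta>\<^sub>0)"
  proof -
    have "cos (2 * pi * \<delta>) \<le> cos (2 * pi * \<delta>\<^sub>0)"
      using assms by (subst cos_mono_le_eq) auto
    then show ?thesis
      by simp
  qed
  finally have "2 - 2 * cos (2 * pi * \<delta>\<^sub>0) \<le> u\<^sup>2 + v\<^sup>2" .
  have square_le: "z\<^sup>2 \<le> 2 * \<bar>z\<bar>" if "\<bar>z\<bar> \<le> 2" for z :: real
  proof -
    have "z\<^sup>2 = \<bar>z\<bar> * \<bar>z\<bar>"
      by (simp add: power2_eq_square)
    also have "\<dots> \<le> 2 * \<bar>z\<bar>"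
      using that by (intro mult_right_mono) auto
    finally show ?thesis .
  qed
  have "\<bar>u\<bar> \<le> 2" "\<bar>v\<bar> \<le> 2"
    unfolding u_def v_def
    using abs_triangle_ineq4[of "cos (2 * pi * (a + \<delta>))" "cos (2 * pi * a)"]
      abs_triangle_ineq4[of "sin (2 * pi * (a + \<delta>))" "sin (2 * pi * a)"]
      abs_cos_le_one[of "2 * pi * (a + \<delta>)"] abs_cos_le_one[of "2 * pi * a"]
      abs_sin_le_one[of "2 * pi * (a + \<delta>)"] abs_sin_le_one[of "2 * pi * a"]
    by linarith+
  then have "u\<^sup>2 \<le> 2 * \<bar>u\<bar>" "v\<^sup>2 \<le> 2 * \<bar>v\<bar>"
    by (simp_all add: square_le)
  with \<open>2 - 2 * cos (2 * pi * \<delta>\<^sub>0) \<le> u\<^sup>2 + v\<^sup>2\<close> show ?thesis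
    unfolding u_def[symmetric] v_def[symmetric] by linarith
qed

section \<open>Weierstrass functions with ratio \<open>b powr -\<alpha>\<close>\<close>

locale weierstrass_setting =
  fixes b :: nat and \<alpha> :: real
  assumes b_ge_2: "2 \<le> b" and \<alpha>_pos: "0 < \<alpha>" and \<alpha>_less_1: "\<alpha> < 1"
begin

definition \<rho> :: real where
  "\<rho> = real b powr - \<alpha>"

definition scale_const :: real where
  "scale_const = real b / (\<rho> * real b - 1) + 1 / (1 - \<rho>)"

lemma real_b_ge_2: "2 \<le> real b"
  using b_ge_2 by simp

lemma b_le_power: "0 < M \<Longrightarrow> real b \<le> real b ^ M"
  using power_increasing[of 1 M "real b"] b_ge_2 by simp

lemma \<rho>_pos: "0 < \<rho>"
  unfolding \<rho>_def using b_ge_2 by simp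

lemma \<rho>_less_1: "\<rho> < 1"
  unfolding \<rho>_def using b_ge_2 \<alpha>_pos by (intro powr_less_one) auto

lemma \<rho>_mult_b_gt_1: "1 < \<rho> * real b"
proof -
  have "\<rho> * real b = real b powr (1 - \<alpha>)"
    unfolding \<rho>_def using b_ge_2 by (simp add: powr_diff powr_minus_divide)
  then show ?thesis
    using b_ge_2 \<alpha>_less_1 by simp
qed

lemma scale_const_ge_1: "1 \<le> scale_const"
proof -
  have "0 \<le> real b / (\<rho> * real b - 1)" "1 \<le> 1 / (1 - \<rho>)"
    using \<rho>_mult_b_gt_1 \<rho>_pos \<rho>_less_1 by (auto simp: field_simps)
  then show ?thesis
    unfolding scale_const_def by linarith
qed

lemma exists_scale_index:
  obtains M where "0 < M" "scale_const * \<rho> ^ M \<le> 1/2"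
proof -
  obtain M where "\<rho> ^ M < 1 / (2 * scale_const)"
    using real_arch_pow_inv[of "1 / (2 * scale_const)" \<rho>] scale_const_ge_1 \<rho>_pos \<rho>_less_1 by auto
  then have "scale_const * \<rho> ^ M \<le> 1/2"
    using scale_const_ge_1 by (simp add: field_simps)
  moreover have "0 < M"
    using calculation scale_const_ge_1 by (cases M) auto
  ultimately show ?thesis
    using that by blast
qed

lemma \<rho>_power_eq: "\<rho> ^ N = (1 / real b ^ N) powr \<alpha>"
  unfolding \<rho>_def using b_ge_2 by (simp add: powr_minus_power)

lemma \<rho>_power_le_powr:
  assumes "1 \<le> real b ^ N * \<delta>"
  shows "\<rho> ^ N \<le> \<delta> powr \<alpha>"
  unfolding \<rho>_power_eq using b_ge_2 \<alpha>_pos assms by (intro powr_mono2) (auto simp: field_simps)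

lemma \<rho>_mult_powr_le_\<rho>_power:
  assumes "0 \<le> \<delta>" "real b ^ N * \<delta> \<le> real b"
  shows "\<rho> * \<delta> powr \<alpha> \<le> \<rho> ^ N"
proof -
  have "\<rho> * \<delta> powr \<alpha> = (\<delta> / real b) powr \<alpha>"
    unfolding \<rho>_def using assms b_ge_2 by (simp add: powr_divide powr_minus_divide)
  also have "\<dots> \<le> (1 / real b ^ N) powr \<alpha>"
    using assms b_ge_2 \<alpha>_pos by (intro powr_mono2) (auto simp: field_simps)
  also have "\<dots> = \<rho> ^ N"
    by (rule \<rho>_power_eq[symmetric])
  finally show ?thesis .
qed

lemma weierstrass_eq_suminf: "weierstrass \<alpha> b g x = (\<Sum>k. \<rho> ^ k * g (real b ^ k * x))"
  unfolding weierstrass_def \<rho>_def using b_ge_2 by (simp add: powr_power mult.commute)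

lemma summable_weierstrass_terms:
  assumes "\<And>s. \<bar>g s\<bar> \<le> M"
  shows "summable (\<lambda>k. \<rho> ^ k * g (real b ^ k * x))"
proof (rule summable_comparison_test')
  show "summable (\<lambda>k. M * \<rho> ^ k)"
    using \<rho>_pos \<rho>_less_1 by (intro summable_mult summable_geometric) auto
  show "norm (\<rho> ^ k * g (real b ^ k * x)) \<le> M * \<rho> ^ k" for k
    using assms[of "real b ^ k * x"] \<rho>_pos by (simp add: abs_mult mult.commute mult_left_mono)
qed

lemma weierstrass_increment_sums:
  assumes "\<And>s. \<bar>g s\<bar> \<le> M"
  shows "(\<lambda>k. \<rho> ^ k * (g (real b ^ k * (x + \<delta>)) - g (real b ^ k * x))) sums
    (weierstrass \<alpha> b g (x + \<delta>) - weierstrass \<alpha> b g x)"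
  unfolding weierstrass_eq_suminf right_diff_distrib
  by (intro sums_diff summable_sums summable_weierstrass_terms[OF assms])

lemma summable_\<rho>_power_min: "0 \<le> \<delta> \<Longrightarrow> summable (\<lambda>k. \<rho> ^ k * min (real b ^ k * \<delta>) 1)"
  using \<rho>_pos \<rho>_less_1 by (intro summable_power_min) auto

lemma suminf_\<rho>_power_min_le:
  assumes "0 \<le> \<delta>" "real b ^ N * \<delta> \<le> real b"
  shows "(\<Sum>k. \<rho> ^ k * min (real b ^ k * \<delta>) 1) \<le> scale_const * \<rho> ^ N"
  unfolding scale_const_def using \<rho>_pos \<rho>_less_1 \<rho>_mult_b_gt_1 assms
  by (intro suminf_power_min_le) auto

lemma weierstrass_increment_le:
  assumes lip: "\<And>s t. \<bar>g s - g t\<bar> \<le> L * \<bar>s - t\<bar>" and bounded: "\<And>s. \<bar>g s\<bar> \<le> M"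
    and \<delta>: "0 < \<delta>" "\<delta> < real b"
  shows "\<bar>weierstrass \<alpha> b g (x + \<delta>) - weierstrass \<alpha> b g x\<bar> \<le> (L + 2 * M) * scale_const * \<delta> powr \<alpha>"
proof -
  obtain N where N: "1 \<le> real b ^ N * \<delta>" "real b ^ N * \<delta> < real b"
    using exists_power_mult_between[of "real b" \<delta>] b_ge_2 \<delta> by auto
  define m where "m k = \<rho> ^ k * min (real b ^ k * \<delta>) 1" for k
  have LM: "0 \<le> L + 2 * M"
    using lip[of 1 0] bounded[of 0] abs_ge_zero[of "g 1 - g 0"] abs_ge_zero[of "g 0"] by simp
  have term_le: "\<bar>\<rho> ^ k * (g (real b ^ k * (x + \<delta>)) - g (real b ^ k * x))\<bar> \<le> (L + 2 * M) * m k" for k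
  proof -
    have "\<bar>g (real b ^ k * x + real b ^ k * \<delta>) - g (real b ^ k * x)\<bar>
        \<le> (L + 2 * M) * min (real b ^ k * \<delta>) 1"
      using \<delta> by (intro lipschitz_bounded_increment_le[OF lip bounded]) simp
    moreover have "real b ^ k * (x + \<delta>) = real b ^ k * x + real b ^ k * \<delta>"
      by (simp add: distrib_left)
    ultimately have "\<rho> ^ k * \<bar>g (real b ^ k * (x + \<delta>)) - g (real b ^ k * x)\<bar>
        \<le> \<rho> ^ k * ((L + 2 * M) * min (real b ^ k * \<delta>) 1)"
      using \<rho>_pos by (intro mult_left_mono) auto
    then show ?thesis
      unfolding m_def using \<rho>_pos by (simp add: abs_mult mult.left_commute)
  qed
  have "\<bar>weierstrass \<alpha> b g (x + \<delta>) - weierstrass \<alpha> b g x\<bar>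
      = \<bar>\<Sum>k. \<rho> ^ k * (g (real b ^ k * (x + \<delta>)) - g (real b ^ k * x))\<bar>"
    using weierstrass_increment_sums[of g M, OF bounded] by (simp add: sums_iff)
  also have "\<dots> \<le> (\<Sum>k. (L + 2 * M) * m k)"
  proof -
    have "summable (\<lambda>k. (L + 2 * M) * m k)"
      unfolding m_def using summable_\<rho>_power_min[of \<delta>] \<delta> by (intro summable_mult) auto
    with term_le show ?thesis
      using norm_suminf_le[of "\<lambda>k. \<rho> ^ k * (g (real b ^ k * (x + \<delta>)) - g (real b ^ k * x))"] by simp
  qed
  also have "\<dots> = (L + 2 * M) * (\<Sum>k. m k)"
    using summable_\<rho>_power_min[of \<delta>] \<delta> unfolding m_def by (simp add: suminf_mult)
  also have "\<dots> \<le> (L + 2 * M) * (scale_const * \<rho> ^ N)"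
    unfolding m_def using suminf_\<rho>_power_min_le[of \<delta> N] LM \<delta> N by (intro mult_left_mono) auto
  also have "\<dots> \<le> (L + 2 * M) * (scale_const * \<delta> powr \<alpha>)"
    using \<rho>_power_le_powr[OF N(1)] scale_const_ge_1 LM by (intro mult_left_mono) auto
  finally show ?thesis
    by (simp add: mult.assoc)
qed

lemma weierstrass_sawtooth_increment_ge:
  assumes \<eta>: "0 \<le> \<eta>" "\<eta> < 1" and \<delta>: "0 \<le> \<delta>" "real b ^ K * \<delta> \<le> 1"
    and window: "real b ^ K * a - c \<le> of_int q" "of_int q + \<eta> \<le> real b ^ K * (a + \<delta>) - c"
  shows "\<eta> * \<rho> ^ K - \<eta> * (\<Sum>k. \<rho> ^ k * min (real b ^ k * \<delta>) 1)
    \<le> weierstrass \<alpha> b (sawtooth \<eta> c) (a + \<delta>) - weierstrass \<alpha> b (sawtooth \<eta> c) a"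
proof -
  define m where "m k = \<rho> ^ k * min (real b ^ k * \<delta>) 1" for k
  define lower where "lower k = (if k = K then \<eta> * \<rho> ^ k else 0) - \<eta> * m k" for k
  have lower_sums: "lower sums (\<eta> * \<rho> ^ K - \<eta> * (\<Sum>k. m k))"
    unfolding lower_def m_def
    by (intro sums_diff sums_single sums_mult summable_sums summable_\<rho>_power_min \<delta>)
  have terms_sums: "(\<lambda>k. \<rho> ^ k * (sawtooth \<eta> c (real b ^ k * (a + \<delta>)) - sawtooth \<eta> c (real b ^ k * a)))
      sums (weierstrass \<alpha> b (sawtooth \<eta> c) (a + \<delta>) - weierstrass \<alpha> b (sawtooth \<eta> c) a)"
    using abs_sawtooth_le \<eta> by (intro weierstrass_increment_sums[of _ \<eta>]) simp
  have lower_le: "lower k \<le> \<rho> ^ k * (sawtooth \<eta> c (real b ^ k * (a + \<delta>)) - sawtooth \<eta> c (real b ^ k * a))" for k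
  proof -
    have split: "real b ^ k * (a + \<delta>) = real b ^ k * a + real b ^ k * \<delta>"
      by (simp add: distrib_left)
    have "(if k = K then \<eta> else 0) - \<eta> * min (real b ^ k * \<delta>) 1
        \<le> sawtooth \<eta> c (real b ^ k * a + real b ^ k * \<delta>) - sawtooth \<eta> c (real b ^ k * a)"
    proof (cases "k = K")
      case True
      then show ?thesis
        using sawtooth_increment_ge_window[OF \<eta>, of "real b ^ K * a" c q "real b ^ K * \<delta>"]
          window \<delta> by (simp add: algebra_simps)
    next
      case False
      then show ?thesis
        using sawtooth_increment_ge[of \<eta> "real b ^ k * \<delta>" c "real b ^ k * a"] \<eta> \<delta> by simp
    qed
    then have "\<rho> ^ k * ((if k = K then \<eta> else 0) - \<eta> * min (real b ^ k * \<delta>) 1)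
        \<le> \<rho> ^ k * (sawtooth \<eta> c (real b ^ k * a + real b ^ k * \<delta>) - sawtooth \<eta> c (real b ^ k * a))"
      using \<rho>_pos by (intro mult_left_mono) auto
    moreover have "lower k = \<rho> ^ k * ((if k = K then \<eta> else 0) - \<eta> * min (real b ^ k * \<delta>) 1)"
      unfolding lower_def m_def by (cases "k = K") (simp_all add: right_diff_distrib mult.left_commute)
    ultimately show ?thesis
      unfolding split by simp
  qed
  show ?thesis
    using sums_le[OF lower_le lower_sums terms_sums] unfolding m_def .
qed

definition weierstrass_preimage :: "(real \<Rightarrow> real) \<Rightarrow> real \<Rightarrow> real" where
  "weierstrass_preimage h z = h z - \<rho> * h (real b * z)"

lemma weierstrass_weierstrass_preimage:
  assumes "\<And>s. \<bar>h s\<bar> \<le> M"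
  shows "weierstrass \<alpha> b (weierstrass_preimage h) x = h x"
proof -
  define f where "f k = \<rho> ^ k * h (real b ^ k * x)" for k
  have "f \<longlonglongrightarrow> 0"
    unfolding f_def using summable_weierstrass_terms[OF assms] by (rule summable_LIMSEQ_zero)
  then have "(\<lambda>k. f k - f (Suc k)) sums h x"
    using telescope_sums'[of f 0] by (simp add: f_def)
  moreover have "f k - f (Suc k) = \<rho> ^ k * weierstrass_preimage h (real b ^ k * x)" for k
    unfolding f_def weierstrass_preimage_def by (simp add: algebra_simps)
  ultimately show ?thesis
    unfolding weierstrass_eq_suminf by (simp add: sums_iff)
qed

lemma one_periodic_weierstrass_preimage:
  assumes "one_periodic h"
  shows "one_periodic (weierstrass_preimage h)"
  using assms one_periodic_compose_mult_nat[OF assms, of b]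
  unfolding one_periodic_def weierstrass_preimage_def by simp

lemma weierstrass_preimage_lipschitz:
  assumes lip: "\<And>s t. \<bar>h s - h t\<bar> \<le> L * \<bar>s - t\<bar>"
  shows "\<bar>weierstrass_preimage h s - weierstrass_preimage h t\<bar> \<le> L * (1 + real b) * \<bar>s - t\<bar>"
proof -
  have "\<bar>weierstrass_preimage h s - weierstrass_preimage h t\<bar>
      \<le> \<bar>h s - h t\<bar> + \<rho> * \<bar>h (real b * s) - h (real b * t)\<bar>"
  proof -
    have "weierstrass_preimage h s - weierstrass_preimage h t
        = (h s - h t) - \<rho> * (h (real b * s) - h (real b * t))"
      unfolding weierstrass_preimage_def by (simp add: algebra_simps)
    then show ?thesis
      using abs_triangle_ineq4[of "h s - h t" "\<rho> * (h (real b * s) - h (real b * t))"] \<rho>_pos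
      by (simp add: abs_mult)
  qed
  also have "\<dots> \<le> L * \<bar>s - t\<bar> + \<bar>h (real b * s) - h (real b * t)\<bar>"
    using lip[of s t] \<rho>_less_1 mult_right_mono[of \<rho> 1 "\<bar>h (real b * s) - h (real b * t)\<bar>"] by simp
  also have "\<dots> \<le> L * \<bar>s - t\<bar> + L * (real b * \<bar>s - t\<bar>)"
    using lip[of "real b * s" "real b * t"] by (simp add: abs_mult flip: right_diff_distrib)
  finally show ?thesis
    by (simp add: algebra_simps)
qed

lemma abs_weierstrass_preimage_le:
  assumes "\<And>s. \<bar>h s\<bar> \<le> M"
  shows "\<bar>weierstrass_preimage h z\<bar> \<le> 2 * M"
proof -
  have "\<bar>weierstrass_preimage h z\<bar> \<le> \<bar>h z\<bar> + \<rho> * \<bar>h (real b * z)\<bar>"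
    unfolding weierstrass_preimage_def using \<rho>_pos abs_triangle_ineq4[of "h z" "\<rho> * h (real b * z)"]
    by (simp add: abs_mult)
  also have "\<dots> \<le> M + 1 * M"
    using assms[of z] assms[of "real b * z"] \<rho>_pos \<rho>_less_1 by (intro add_mono mult_mono) auto
  finally show ?thesis
    by simp
qed

definition holder_family :: "nat \<Rightarrow> nat \<Rightarrow> real \<Rightarrow> real" where
  "holder_family M i =
     (if i = 0 then weierstrass_preimage (\<lambda>z. cos (2 * pi * z))
      else if i = 1 then weierstrass_preimage (\<lambda>z. sin (2 * pi * z))
      else sawtooth (1 / (2 * real b ^ M)) (real (i - 2) / (2 * real b ^ M)))"

lemma
  shows one_periodic_holder_family: "one_periodic (holder_family M i)"
    and holder_family_lipschitz:
      "\<bar>holder_family M i s - holder_family M i t\<bar> \<le> 2 * pi * (1 + real b) * \<bar>s - t\<bar>"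
    and abs_holder_family_le: "\<bar>holder_family M i s\<bar> \<le> 2"
proof -
  have trig_lipschitz: "\<bar>f (2 * pi * s) - f (2 * pi * t)\<bar> \<le> 2 * pi * \<bar>s - t\<bar>"
    if "\<And>u v. \<bar>f u - f v\<bar> \<le> \<bar>u - v\<bar>" for f :: "real \<Rightarrow> real" and s t
    using that[of "2 * pi * s" "2 * pi * t"] by (simp add: abs_mult flip: right_diff_distrib)
  have cos_props: "one_periodic (\<lambda>z. cos (2 * pi * z))"
    "\<bar>cos (2 * pi * s) - cos (2 * pi * t)\<bar> \<le> 2 * pi * \<bar>s - t\<bar>" for s t
    using cos_periodic trig_lipschitz[OF abs_cos_diff_le]
    by (auto simp: one_periodic_def distrib_left)
  have sin_props: "one_periodic (\<lambda>z. sin (2 * pi * z))"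
    "\<bar>sin (2 * pi * s) - sin (2 * pi * t)\<bar> \<le> 2 * pi * \<bar>s - t\<bar>" for s t
    using sin_periodic trig_lipschitz[OF abs_sin_diff_le]
    by (auto simp: one_periodic_def distrib_left)
  define \<eta> :: real where "\<eta> = 1 / (2 * real b ^ M)"
  have "1 \<le> real b ^ M"
    using b_ge_2 by (intro one_le_power) simp
  then have \<eta>: "0 \<le> \<eta>" "\<eta> \<le> 1"
    unfolding \<eta>_def by (simp_all add: divide_le_eq)
  have "2 * pi * 1 \<le> 2 * pi * (1 + real b)"
    by (intro mult_left_mono) auto
  then have "1 \<le> 2 * pi * (1 + real b)"
    using pi_gt3 by linarith
  then have sawtooth_lipschitz': "\<bar>sawtooth \<eta> c s - sawtooth \<eta> c t\<bar> \<le> 2 * pi * (1 + real b) * \<bar>s - t\<bar>" for c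
    using sawtooth_lipschitz[OF \<eta>, of c s t] mult_right_mono[of 1 _ "\<bar>s - t\<bar>"] by fastforce
  show "one_periodic (holder_family M i)"
    unfolding holder_family_def
    using one_periodic_weierstrass_preimage cos_props sin_props one_periodic_sawtooth by simp
  show "\<bar>holder_family M i s - holder_family M i t\<bar> \<le> 2 * pi * (1 + real b) * \<bar>s - t\<bar>"
    unfolding holder_family_def \<eta>_def[symmetric]
    using weierstrass_preimage_lipschitz[of _ "2 * pi", OF cos_props(2)]
      weierstrass_preimage_lipschitz[of _ "2 * pi", OF sin_props(2)] sawtooth_lipschitz'
    by simp
  show "\<bar>holder_family M i s\<bar> \<le> 2"
    unfolding holder_family_def \<eta>_def[symmetric]
    using abs_weierstrass_preimage_le[of _ 1] order_trans[OF abs_sawtooth_le[OF \<eta>]] \<eta> by simp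
qed

lemma circle_lipschitz_holder_family: "circle_lipschitz (holder_family M i)"
proof -
  have "(2 * pi * (1 + real b))-lipschitz_on UNIV (holder_family M i)"
    by (intro lipschitz_onI) (simp_all add: dist_real_def holder_family_lipschitz)
  then show ?thesis
    unfolding circle_lipschitz_def using one_periodic_holder_family by blast
qed

lemma weierstrass_holder_family_0_1:
  "weierstrass \<alpha> b (holder_family M 0) x = cos (2 * pi * x)"
  "weierstrass \<alpha> b (holder_family M 1) x = sin (2 * pi * x)"
  unfolding holder_family_def by (simp_all add: weierstrass_weierstrass_preimage[of _ 1])

lemma holder_family_increment_le:
  assumes "0 < \<delta>" "\<delta> < real b"
  shows "\<bar>weierstrass \<alpha> b (holder_family M i) (a + \<delta>) - weierstrass \<alpha> b (holder_family M i) a\<bar>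
    \<le> (2 * pi * (1 + real b) + 4) * scale_const * \<delta> powr \<alpha>"
  using weierstrass_increment_le[OF holder_family_lipschitz abs_holder_family_le assms] by simp

lemma holder_family_large_increment_ge:
  assumes "1 \<le> real b ^ M * \<delta>" "\<delta> \<le> 1/2"
  shows "\<exists>i<2. (1 - cos (2 * pi / real b ^ M)) / 2
    \<le> \<bar>weierstrass \<alpha> b (holder_family M i) (a + \<delta>) - weierstrass \<alpha> b (holder_family M i) a\<bar>"
proof -
  have "1 / real b ^ M \<le> \<delta>"
    using assms(1) b_ge_2 by (simp add: divide_le_eq mult.commute)
  then have "1 - cos (2 * pi / real b ^ M)
      \<le> \<bar>cos (2 * pi * (a + \<delta>)) - cos (2 * pi * a)\<bar> + \<bar>sin (2 * pi * (a + \<delta>)) - sin (2 * pi * a)\<bar>"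
    using cos_sin_increment_ge[of "1 / real b ^ M" \<delta> a] assms(2) by simp
  then show ?thesis
  proof (cases "(1 - cos (2 * pi / real b ^ M)) / 2 \<le> \<bar>cos (2 * pi * (a + \<delta>)) - cos (2 * pi * a)\<bar>")
    case True
    then show ?thesis
      using weierstrass_holder_family_0_1(1)[of M] by (intro exI[of _ 0]) simp
  next
    case False
    with \<open>1 - cos (2 * pi / real b ^ M) \<le> _\<close>
    have "(1 - cos (2 * pi / real b ^ M)) / 2 \<le> \<bar>sin (2 * pi * (a + \<delta>)) - sin (2 * pi * a)\<bar>"
      by argo
    then show ?thesis
      using weierstrass_holder_family_0_1(2)[of M] by (intro exI[of _ 1]) simp
  qed
qed

lemma exists_intermediate_scale:
  assumes M: "0 < M" and \<delta>: "0 < \<delta>" "real b ^ M * \<delta> < 1"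
  obtains K where "1 / real b ^ M \<le> real b ^ K * \<delta>" "real b ^ K * \<delta> \<le> 1"
    "real b ^ (M + K) * \<delta> < real b"
proof -
  note b_le = b_le_power[OF M]
  have "\<delta> \<le> real b ^ M * \<delta>"
    using mult_right_mono[of 1 "real b ^ M" \<delta>] b_le b_ge_2 \<delta> by simp
  with \<delta> real_b_ge_2 have "\<delta> < real b"
    by linarith
  then obtain N where N: "1 \<le> real b ^ N * \<delta>" "real b ^ N * \<delta> < real b"
    using exists_power_mult_between[of "real b" \<delta>] b_ge_2 \<delta> by auto
  have "real b ^ M < real b ^ N"
    using mult_right_less_imp_less[of "real b ^ M" \<delta> "real b ^ N"] N(1) \<delta> by linarith
  then have "M < N"
    using b_ge_2 by (simp add: power_less_imp_less_exp)
  then obtain K where K: "N = M + K"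
    using less_imp_add_positive by blast
  have "real b ^ M * (real b ^ K * \<delta>) < real b ^ M * 1"
    using N(2) b_le unfolding K power_add mult.assoc by linarith
  then have "real b ^ K * \<delta> \<le> 1"
    using b_ge_2 by (simp add: mult_less_cancel_left_pos)
  moreover have "1 / real b ^ M \<le> real b ^ K * \<delta>"
    using N(1) b_ge_2 unfolding K by (subst pos_divide_le_eq) (auto simp: power_add ac_simps)
  ultimately show ?thesis
    using that N(2) unfolding K by blast
qed

lemma \<rho>_power_bounds:
  assumes M: "scale_const * \<rho> ^ M \<le> 1/2" and \<delta>: "0 < \<delta>" "real b ^ (M + K) * \<delta> < real b"
  shows "(\<Sum>k. \<rho> ^ k * min (real b ^ k * \<delta>) 1) \<le> \<rho> ^ K / 2" "\<rho> * \<delta> powr \<alpha> \<le> \<rho> ^ K"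
proof -
  have "(\<Sum>k. \<rho> ^ k * min (real b ^ k * \<delta>) 1) \<le> scale_const * \<rho> ^ (M + K)"
    using suminf_\<rho>_power_min_le[of \<delta> "M + K"] \<delta> by simp
  also have "\<dots> = (scale_const * \<rho> ^ M) * \<rho> ^ K"
    by (simp add: power_add mult.assoc)
  also have "\<dots> \<le> 1/2 * \<rho> ^ K"
    using M \<rho>_pos by (intro mult_right_mono) auto
  finally show "(\<Sum>k. \<rho> ^ k * min (real b ^ k * \<delta>) 1) \<le> \<rho> ^ K / 2"
    by simp
  have "\<rho> * \<delta> powr \<alpha> \<le> \<rho> ^ (M + K)"
    using \<rho>_mult_powr_le_\<rho>_power[of \<delta> "M + K"] \<delta> by simp
  also have "\<dots> \<le> \<rho> ^ K"
    using \<rho>_pos \<rho>_less_1 by (intro power_decreasing) auto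
  finally show "\<rho> * \<delta> powr \<alpha> \<le> \<rho> ^ K" .
qed

lemma holder_family_small_increment_ge:
  assumes M: "0 < M" "scale_const * \<rho> ^ M \<le> 1/2" and \<delta>: "0 < \<delta>" "real b ^ M * \<delta> < 1"
  shows "\<exists>i<2 * b ^ M + 2. \<rho> / (4 * real b ^ M) * \<delta> powr \<alpha>
    \<le> \<bar>weierstrass \<alpha> b (holder_family M i) (a + \<delta>) - weierstrass \<alpha> b (holder_family M i) a\<bar>"
proof -
  obtain K where K: "1 / real b ^ M \<le> real b ^ K * \<delta>" "real b ^ K * \<delta> \<le> 1"
    "real b ^ (M + K) * \<delta> < real b"
    using exists_intermediate_scale[OF M(1) \<delta>] by blast
  define n where "n = 2 * b ^ M"
  have n: "2 \<le> n" "real n = 2 * real b ^ M"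
    unfolding n_def using b_ge_2 by simp_all
  have "1 / real n < 1"
    using n(1) by simp
  have "2 / real n \<le> real b ^ K * \<delta>"
    using K(1) unfolding n(2) by simp
  moreover have "0 < n"
    using n(1) by simp
  ultimately obtain m q where window: "m < n" "real b ^ K * a - m / n \<le> of_int q"
      "of_int q + 1 / n \<le> real b ^ K * a - m / n + real b ^ K * \<delta>"
    using exists_window_shift by blast
  note sum_le = \<rho>_power_bounds(1)[OF M(2) \<delta>(1) K(3)]
    and powr_le = \<rho>_power_bounds(2)[OF M(2) \<delta>(1) K(3)]
  have "\<rho> / (4 * real b ^ M) * \<delta> powr \<alpha> = 1 / n * (\<rho> * \<delta> powr \<alpha>) / 2"
    unfolding n by simp
  also have "\<dots> \<le> 1 / n * \<rho> ^ K / 2"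
    using powr_le by (intro divide_right_mono mult_left_mono) auto
  also have "\<dots> \<le> 1 / n * \<rho> ^ K - 1 / n * (\<Sum>k. \<rho> ^ k * min (real b ^ k * \<delta>) 1)"
    using mult_left_mono[OF sum_le, of "1 / n"] by simp
  also have "\<dots> \<le> weierstrass \<alpha> b (sawtooth (1 / n) (m / n)) (a + \<delta>)
      - weierstrass \<alpha> b (sawtooth (1 / n) (m / n)) a"
    using window \<open>1 / real n < 1\<close> \<delta> K(2) by (intro weierstrass_sawtooth_increment_ge) (auto simp: algebra_simps)
  also have "sawtooth (1 / n) (m / n) = holder_family M (m + 2)"
    unfolding holder_family_def n by simp
  finally show ?thesis
    using window(1) unfolding n_def by (intro exI[of _ "m + 2"]) auto
qed

lemma holder_family_increment_ge:
  assumes M: "0 < M" "scale_const * \<rho> ^ M \<le> 1/2"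
  obtains c where "0 < c"
    "\<And>a \<delta>. 0 < \<delta> \<Longrightarrow> \<delta> \<le> 1/2 \<Longrightarrow> \<exists>i<2 * b ^ M + 2. c * \<delta> powr \<alpha>
      \<le> \<bar>weierstrass \<alpha> b (holder_family M i) (a + \<delta>) - weierstrass \<alpha> b (holder_family M i) a\<bar>"
proof
  define c where "c = min ((1 - cos (2 * pi / real b ^ M)) / 2) (\<rho> / (4 * real b ^ M))"
  have "2 \<le> real b ^ M"
    using b_le_power[OF M(1)] real_b_ge_2 by linarith
  then have "0 < real b ^ M" "2 * pi \<le> pi * real b ^ M"
    using mult_left_mono[of 2 "real b ^ M" pi] b_ge_2 by simp_all
  then have "0 < 2 * pi / real b ^ M" "2 * pi / real b ^ M \<le> pi"
    by (simp_all add: pos_divide_le_eq)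
  then have "cos (2 * pi / real b ^ M) < cos 0"
    by (intro cos_monotone_0_pi) auto
  then show "0 < c"
    unfolding c_def using \<rho>_pos \<open>0 < real b ^ M\<close> by simp
  fix a \<delta> :: real
  assume \<delta>: "0 < \<delta>" "\<delta> \<le> 1/2"
  show "\<exists>i<2 * b ^ M + 2. c * \<delta> powr \<alpha>
    \<le> \<bar>weierstrass \<alpha> b (holder_family M i) (a + \<delta>) - weierstrass \<alpha> b (holder_family M i) a\<bar>"
  proof (cases "1 \<le> real b ^ M * \<delta>")
    case True
    have "c * \<delta> powr \<alpha> \<le> c"
      using \<open>0 < c\<close> \<delta> \<alpha>_pos by (intro mult_left_le powr_le1) auto
    also have "\<dots> \<le> (1 - cos (2 * pi / real b ^ M)) / 2"
      unfolding c_def by (rule min.cobounded1)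
    moreover obtain i where "i < 2" "(1 - cos (2 * pi / real b ^ M)) / 2
        \<le> \<bar>weierstrass \<alpha> b (holder_family M i) (a + \<delta>) - weierstrass \<alpha> b (holder_family M i) a\<bar>"
      using holder_family_large_increment_ge[OF True \<delta>(2)] by blast
    ultimately show ?thesis
      by (intro exI[of _ i]) auto
  next
    case False
    have "c * \<delta> powr \<alpha> \<le> \<rho> / (4 * real b ^ M) * \<delta> powr \<alpha>"
      unfolding c_def by (intro mult_right_mono) auto
    then show ?thesis
      using holder_family_small_increment_ge[OF M \<delta>(1), of a] False by fastforce
  qed
qed

end

theorem theorem2p1:
  fixes b :: nat and \<alpha> :: real
  assumes "b \<ge> 2" and "0 < \<alpha>" and "\<alpha> < 1"
  shows "\<exists>(d::nat) (gs :: nat \<Rightarrow> real \<Rightarrow> real).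
           (\<forall>i<d. circle_lipschitz (gs i)) \<and>
           (\<exists>c1 c2. c1 > 0 \<and> c2 > 0 \<and>
              (\<forall>x y. 0 \<le> x \<and> x < 1 \<and> 0 \<le> y \<and> y < 1 \<longrightarrow>
                 c1 * circle_dist x y powr \<alpha>
                   \<le> linf_dist d (weierstrass_embedding \<alpha> b d gs x) (weierstrass_embedding \<alpha> b d gs y) \<and>
                 linf_dist d (weierstrass_embedding \<alpha> b d gs x) (weierstrass_embedding \<alpha> b d gs y)
                   \<le> c2 * circle_dist x y powr \<alpha>))"
proof -
  interpret weierstrass_setting b \<alpha>
    using assms by unfold_locales
  obtain M where M: "0 < M" "scale_const * \<rho> ^ M \<le> 1/2"
    using exists_scale_index by blast
  define d where "d = 2 * b ^ M + 2"
  define F where "F i = weierstrass \<alpha> b (holder_family M i)" for i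
  obtain c1 where c1: "0 < c1"
    and lower: "\<And>a \<delta>. 0 < \<delta> \<Longrightarrow> \<delta> \<le> 1/2 \<Longrightarrow> \<exists>i<d. c1 * \<delta> powr \<alpha> \<le> \<bar>F i (a + \<delta>) - F i a\<bar>"
    using holder_family_increment_ge[OF M] unfolding d_def F_def by metis
  define c2 where "c2 = (2 * pi * (1 + real b) + 4) * scale_const"
  have c2: "0 < c2"
    unfolding c2_def using scale_const_ge_1 pi_gt_zero b_ge_2 by (intro mult_pos_pos add_pos_pos) auto
  have upper: "\<bar>F i (a + \<delta>) - F i a\<bar> \<le> c2 * \<delta> powr \<alpha>" if "0 < \<delta>" "\<delta> \<le> 1/2" for i a \<delta>
    using holder_family_increment_le[of \<delta> M i a] that real_b_ge_2 unfolding F_def c2_def by simp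
  have periodic: "one_periodic (F i)" for i
    unfolding F_def by (intro one_periodic_weierstrass one_periodic_holder_family)
  have "linf_dist d (weierstrass_embedding \<alpha> b d (holder_family M) x) (weierstrass_embedding \<alpha> b d (holder_family M) y)
      = linf_dist d (\<lambda>i. F i x) (\<lambda>i. F i y)" for x y
    unfolding F_def weierstrass_embedding_def by (rule linf_dist_cong) simp_all
  then show ?thesis
    using circle_bi_holder_of_increments[OF periodic upper lower] c1 c2 circle_lipschitz_holder_family
    by (intro exI[of _ d] exI[of _ "holder_family M"] exI[of _ c1] exI[of _ c2] conjI allI) auto
qed

end
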